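(* Let $(T_0,\widetilde T_0)$ be a joint pair of closed abstract Friedrichs operators on a complex Hilbert space $\mathcal{H}$, with $T_1:=\widetilde T_0^*$, $\widetilde T_1:=T_0^*$, $\mathcal{W}_0:=\operatorname{dom}T_0=\operatorname{dom}\widetilde T_0$ and $\mathcal{W}:=\operatorname{dom}T_1=\operatorname{dom}\widetilde T_1$ equipped with the graph norm of $T_1$. Let $\mathcal{V}$ be a closed subspace of $\mathcal{W}$ with $\mathcal{W}_0\subseteq\mathcal{V}$. Then $T_1|_{\mathcal{V}}:\mathcal{V}\to\mathcal{H}$ is bijective if and only if $\mathcal{V}\dotplus\operatorname{ker}T_1=\mathcal{W}$ (i.e. $\mathcal{V}\cap\operatorname{ker}T_1=\{0\}$ and $\mathcal{V}+\operatorname{ker}T_1=\mathcal{W}$).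
   Context: $\mathcal{H}$ is a complex Hilbert space with inner product $\langle\cdot,\cdot\rangle$ and norm $\|\cdot\|$. A pair $(T,\widetilde T)$ of densely defined linear operators on $\mathcal{H}$ is a joint pair of abstract Friedrichs operators if: (T1) $T$ and $\widetilde T$ have a common dense domain $\mathcal{D}$ and $\langle T\varphi,\psi\rangle=\langle\varphi,\widetilde T\psi\rangle$ for all $\varphi,\psi\in\mathcal{D}$; (T2) there is $c>0$ with $\|(T+\widetilde T)\varphi\|\le c\|\varphi\|$ for all $\varphi\in\mathcal{D}$; (T3) there is $\mu_0>0$ with $\langle (T+\widetilde T)\varphi,\varphi\rangle\ge 2\mu_0\|\varphi\|^2$ for all $\varphi\in\mathcal{D}$. A joint pair of closed abstract Friedrichs operators is such a pair $(T_0,\widetilde T_0)$ in which both operators are closed. One has $T_0\subseteq T_1$, $\widetilde T_0\subseteq\widetilde T_1$ and $\operatorname{dom}T_1=\operatorname{dom}\widetilde T_1$. *)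

theory Defs
  imports "HOL-Analysis.Analysis"
begin

text \<open>A complex Hilbert space is modelled on a real Banach space type 'a, together with
  a complex scalar multiplication sc (extending scaleR) and a complex inner product ip
  (linear in the first argument, conjugate symmetric) inducing the norm.  Completeness
  comes from the class banach.\<close>

definition chilbert :: "(complex \<Rightarrow> 'a::banach \<Rightarrow> 'a) \<Rightarrow> ('a \<Rightarrow> 'a \<Rightarrow> complex) \<Rightarrow> bool" where
  "chilbert sc ip \<longleftrightarrow>
     (\<forall>r x. sc (complex_of_real r) x = scaleR r x) \<and>
     (\<forall>a b x. sc (a * b) x = sc a (sc b x)) \<and>
     (\<forall>a b x. sc (a + b) x = sc a x + sc b x) \<and>
     (\<forall>a x y. sc a (x + y) = sc a x + sc a y) \<and>
     (\<forall>x y z. ip (x + y) z = ip x z + ip y z) \<and>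
     (\<forall>a x y. ip (sc a x) y = a * ip x y) \<and>
     (\<forall>x y. ip y x = cnj (ip x y)) \<and>
     (\<forall>x. Im (ip x x) = 0 \<and> Re (ip x x) \<ge> 0 \<and> norm x = sqrt (Re (ip x x)))"

definition csubspace :: "(complex \<Rightarrow> 'a::banach \<Rightarrow> 'a) \<Rightarrow> 'a set \<Rightarrow> bool" where
  "csubspace sc S \<longleftrightarrow> 0 \<in> S \<and> (\<forall>x\<in>S. \<forall>y\<in>S. x + y \<in> S) \<and> (\<forall>a. \<forall>x\<in>S. sc a x \<in> S)"

definition clinear_op :: "(complex \<Rightarrow> 'a::banach \<Rightarrow> 'a) \<Rightarrow> 'a set \<Rightarrow> ('a \<Rightarrow> 'a) \<Rightarrow> bool" where
  "clinear_op sc D T \<longleftrightarrow> csubspace sc D \<and>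
     (\<forall>x\<in>D. \<forall>y\<in>D. T (x + y) = T x + T y) \<and> (\<forall>a. \<forall>x\<in>D. T (sc a x) = sc a (T x))"

definition closed_op :: "'a::banach set \<Rightarrow> ('a \<Rightarrow> 'a) \<Rightarrow> bool" where
  "closed_op D T \<longleftrightarrow> closed {(x, T x) | x. x \<in> D}"

definition adj_dom :: "('a::banach \<Rightarrow> 'a \<Rightarrow> complex) \<Rightarrow> 'a set \<Rightarrow> ('a \<Rightarrow> 'a) \<Rightarrow> 'a set" where
  "adj_dom ip D T = {y. \<exists>z. \<forall>x\<in>D. ip (T x) y = ip x z}"

definition adj_op :: "('a::banach \<Rightarrow> 'a \<Rightarrow> complex) \<Rightarrow> 'a set \<Rightarrow> ('a \<Rightarrow> 'a) \<Rightarrow> 'a \<Rightarrow> 'a" where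
  "adj_op ip D T y = (THE z. \<forall>x\<in>D. ip (T x) y = ip x z)"

definition joint_AFO :: "(complex \<Rightarrow> 'a::banach \<Rightarrow> 'a) \<Rightarrow> ('a \<Rightarrow> 'a \<Rightarrow> complex)
    \<Rightarrow> 'a set \<Rightarrow> ('a \<Rightarrow> 'a) \<Rightarrow> ('a \<Rightarrow> 'a) \<Rightarrow> bool" where
  "joint_AFO sc ip D T Tt \<longleftrightarrow>
     closure D = UNIV \<and> clinear_op sc D T \<and> clinear_op sc D Tt \<and>
     (\<forall>x\<in>D. \<forall>y\<in>D. ip (T x) y = ip x (Tt y)) \<and>
     (\<exists>c>0. \<forall>x\<in>D. norm (T x + Tt x) \<le> c * norm x) \<and>
     (\<exists>\<mu>0>0. \<forall>x\<in>D. Im (ip (T x + Tt x) x) = 0 \<and> Re (ip (T x + Tt x) x) \<ge> 2 * \<mu>0 * (norm x)\<^sup>2)"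

definition graph_norm :: "('a::banach \<Rightarrow> 'a) \<Rightarrow> 'a \<Rightarrow> real" where
  "graph_norm T x = sqrt ((norm x)\<^sup>2 + (norm (T x))\<^sup>2)"

definition graph_closed_in :: "('a::banach \<Rightarrow> 'a) \<Rightarrow> 'a set \<Rightarrow> 'a set \<Rightarrow> bool" where
  "graph_closed_in T W V \<longleftrightarrow>
     (\<forall>v w. (\<forall>n. v n \<in> V) \<and> w \<in> W \<and> (\<lambda>n. graph_norm T (v n - w)) \<longlonglongrightarrow> 0 \<longrightarrow> w \<in> V)"

end

theory Submission
  imports Defs
begin

text \<open>By (T3), \<open>\<mu>\<^sub>0 \<parallel>x\<parallel> \<le> \<parallel>Tt\<^sub>0 x\<parallel>\<close> on \<open>\<W>\<^sub>0\<close>, so for every \<open>f\<close> the functional \<open>Tt\<^sub>0 x \<mapsto> Re \<langle>x, f\<rangle>\<close>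
  is bounded by a multiple of \<open>\<parallel>Tt\<^sub>0 x\<parallel>\<close>.  As in the proof of the Riesz representation theorem,
  the images under \<open>Tt\<^sub>0\<close> of a minimising sequence of the energy \<open>\<parallel>Tt\<^sub>0 x\<parallel>\<^sup>2/2 - Re \<langle>x, f\<rangle>\<close> form a
  Cauchy sequence (parallelogram law) whose limit \<open>w\<close> represents the functional; hence
  \<open>\<langle>Tt\<^sub>0 x, w\<rangle> = \<langle>x, f\<rangle>\<close> on \<open>\<W>\<^sub>0\<close>, i.e. \<open>T\<^sub>1 w = f\<close>.  Thus \<open>T\<^sub>1\<close> maps \<open>\<W>\<close> onto \<open>\<H>\<close>, and for a
  surjective additive map and a subgroup \<open>\<V> \<subseteq> \<W>\<close>, bijectivity of \<open>T\<^sub>1|\<^sub>\<V>\<close> means exactly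
  \<open>\<V> \<inter> ker T\<^sub>1 = {0}\<close> and \<open>\<V> + ker T\<^sub>1 = \<W>\<close>.\<close>

lemma linear_coeff_zero_if_quadratic_nonneg:
  fixes d c :: real
  assumes nonneg: "\<And>t. 0 \<le> t * d + t\<^sup>2 * c"
  shows "d = 0"
proof (cases "c \<le> 0")
  case True
  have "0 \<le> (-d) * d + (-d)\<^sup>2 * c" by (rule nonneg)
  moreover have "(-d)\<^sup>2 * c \<le> 0" using True by (simp add: mult_nonneg_nonpos)
  ultimately have "d * d \<le> 0" by (simp add: power2_eq_square)
  then show ?thesis by (auto simp: mult_le_0_iff)
next
  case False
  have "0 \<le> (-d / (2*c)) * d + (-d / (2*c))\<^sup>2 * c" by (rule nonneg)
  also have "\<dots> = - (d * d) / (4 * c)" using False by (simp add: power2_eq_square field_simps)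
  finally have "d * d \<le> 0" using False by (simp add: divide_le_0_iff)
  then show ?thesis by (auto simp: mult_le_0_iff)
qed

lemma Cauchy_if_dist_sq_le:
  fixes a :: "nat \<Rightarrow> 'a::metric_space"
  assumes dist_le: "\<And>n k. (dist (a n) (a k))\<^sup>2 \<le> e n + e k" and e: "e \<longlonglongrightarrow> 0"
  shows "Cauchy a"
proof (rule metric_CauchyI)
  fix \<epsilon> :: real assume "0 < \<epsilon>"
  then obtain N where N: "\<And>n. n \<ge> N \<Longrightarrow> \<bar>e n\<bar> < \<epsilon>\<^sup>2 / 2"
    using e unfolding lim_sequentially by (metis dist_real_def diff_zero half_gt_zero zero_less_power)
  have "dist (a n) (a k) < \<epsilon>" if "n \<ge> N" "k \<ge> N" for n k
  proof -
    have "(dist (a n) (a k))\<^sup>2 < \<epsilon>\<^sup>2" using dist_le[of n k] N[OF that(1)] N[OF that(2)] by linarith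
    then show ?thesis using \<open>0 < \<epsilon>\<close> by (simp add: power_less_imp_less_base)
  qed
  then show "\<exists>N. \<forall>n\<ge>N. \<forall>k\<ge>N. dist (a n) (a k) < \<epsilon>" by blast
qed

locale chilbert_space =
  fixes sc :: "complex \<Rightarrow> 'a::banach \<Rightarrow> 'a" and ip :: "'a \<Rightarrow> 'a \<Rightarrow> complex"
  assumes chilbert: "chilbert sc ip"
begin

lemma sc_of_real: "sc (complex_of_real r) x = r *\<^sub>R x"
  using chilbert unfolding chilbert_def by blast

lemma subspace_if_csubspace: "csubspace sc D \<Longrightarrow> subspace D"
  unfolding csubspace_def subspace_def sc_of_real[symmetric] by blast

lemma ip_add_left: "ip (x + y) z = ip x z + ip y z"
  using chilbert unfolding chilbert_def by blast

lemma ip_sc_left: "ip (sc a x) y = a * ip x y"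
  using chilbert unfolding chilbert_def by blast

lemma ip_commute_cnj: "ip y x = cnj (ip x y)"
  using chilbert unfolding chilbert_def by blast

lemma Re_ip_self: "Re (ip x x) = (norm x)\<^sup>2"
proof -
  have "Re (ip x x) \<ge> 0 \<and> norm x = sqrt (Re (ip x x))"
    using chilbert unfolding chilbert_def by blast
  then show ?thesis by simp
qed

lemma ip_add_right: "ip x (y + z) = ip x y + ip x z"
  by (metis ip_commute_cnj ip_add_left complex_cnj_add)

lemma ip_minus_left: "ip (- x) y = - ip x y"
  using ip_add_left[of x "- x" y] ip_add_left[of 0 0 y] by (simp add: eq_neg_iff_add_eq_0)

lemma ip_minus_right: "ip y (- x) = - ip y x"
  by (metis ip_commute_cnj ip_minus_left complex_cnj_minus)

lemma ip_diff_right: "ip z (x - y) = ip z x - ip z y"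
  using ip_add_right[of z x "- y"] ip_minus_right[of z y] by simp

lemma ip_scaleR_left: "ip (r *\<^sub>R x) y = complex_of_real r * ip x y"
  by (metis sc_of_real ip_sc_left)

lemma ip_scaleR_right: "ip y (r *\<^sub>R x) = complex_of_real r * ip y x"
  by (metis ip_commute_cnj ip_scaleR_left complex_cnj_mult complex_cnj_complex_of_real)

lemma Re_ip_commute: "Re (ip y x) = Re (ip x y)"
  by (subst ip_commute_cnj) simp

lemma norm_add_sq: "(norm (x + y))\<^sup>2 = (norm x)\<^sup>2 + 2 * Re (ip x y) + (norm y)\<^sup>2"
proof -
  have "(norm (x + y))\<^sup>2 = Re (ip x x) + Re (ip x y) + Re (ip y x) + Re (ip y y)"
    by (simp add: Re_ip_self[symmetric] ip_add_left ip_add_right)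
  then show ?thesis by (simp add: Re_ip_self Re_ip_commute[of y x])
qed

lemma norm_diff_sq: "(norm (x - y))\<^sup>2 = (norm x)\<^sup>2 - 2 * Re (ip x y) + (norm y)\<^sup>2"
  using norm_add_sq[of x "- y"] by (simp add: ip_minus_right)

lemma parallelogram_law:
  fixes x y :: 'a
  shows "(norm (x + y))\<^sup>2 + (norm (x - y))\<^sup>2 = 2 * (norm x)\<^sup>2 + 2 * (norm y)\<^sup>2"
  using norm_add_sq[of x y] norm_diff_sq[of x y] by simp

text \<open>The norm is already known to satisfy the triangle inequality, so Cauchy--Schwarz follows
  from the polarisation identity \<open>4 Re \<langle>x, y\<rangle> = \<parallel>x + y\<parallel>\<^sup>2 - \<parallel>x - y\<parallel>\<^sup>2\<close>.\<close>

lemma abs_Re_ip_le: "\<bar>Re (ip x y)\<bar> \<le> norm x * norm y"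
proof -
  have sum_le: "(norm (x + y))\<^sup>2 \<le> (norm x + norm y)\<^sup>2" "(norm (x - y))\<^sup>2 \<le> (norm x + norm y)\<^sup>2"
    by (simp_all add: power_mono norm_triangle_ineq norm_triangle_ineq4)
  have "\<bar>norm x - norm y\<bar> \<le> norm (x - y)" "\<bar>norm x - norm y\<bar> \<le> norm (x + y)"
    using norm_triangle_ineq3[of x y] norm_triangle_ineq3[of x "- y"] by simp_all
  then have diff_le: "(norm x - norm y)\<^sup>2 \<le> (norm (x - y))\<^sup>2" "(norm x - norm y)\<^sup>2 \<le> (norm (x + y))\<^sup>2"
    by (metis power2_abs abs_ge_zero power_mono)+
  have "(norm x + norm y)\<^sup>2 - (norm x - norm y)\<^sup>2 = 4 * (norm x * norm y)"
    by (simp add: power2_eq_square algebra_simps)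
  then show ?thesis
    using sum_le diff_le norm_add_sq[of x y] norm_diff_sq[of x y] by linarith
qed

lemma bounded_linear_Re_ip_left: "bounded_linear (\<lambda>x. Re (ip x y))"
proof (rule bounded_linear_intro[where K = "norm y"])
  show "Re (ip (x + x') y) = Re (ip x y) + Re (ip x' y)" for x x' by (simp add: ip_add_left)
  show "Re (ip (r *\<^sub>R x) y) = r *\<^sub>R Re (ip x y)" for r x by (simp add: ip_scaleR_left)
  show "norm (Re (ip x y)) \<le> norm x * norm y" for x using abs_Re_ip_le[of x y] by simp
qed

lemma eq_zero_if_orthogonal_to_dense:
  assumes dense: "closure D = UNIV" and orth: "\<And>x. x \<in> D \<Longrightarrow> ip x y = 0"
  shows "y = 0"
proof -
  obtain xs where xs: "\<And>n. xs n \<in> D" "xs \<longlonglongrightarrow> y"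
    using dense closure_sequential by blast
  have "(\<lambda>n. Re (ip (xs n) y)) \<longlonglongrightarrow> Re (ip y y)"
    by (rule bounded_linear.tendsto[OF bounded_linear_Re_ip_left xs(2)])
  then have "Re (ip y y) = 0" using xs(1) orth by (simp add: LIMSEQ_const_iff)
  then show ?thesis by (simp add: Re_ip_self)
qed

lemma adj_opI:
  assumes dense: "closure D = UNIV" and adjoint: "\<And>x. x \<in> D \<Longrightarrow> ip (T x) w = ip x z"
  shows "w \<in> adj_dom ip D T" and "adj_op ip D T w = z"
proof -
  show "w \<in> adj_dom ip D T" unfolding adj_dom_def using adjoint by blast
  show "adj_op ip D T w = z" unfolding adj_op_def
  proof (rule the_equality)
    show "\<forall>x\<in>D. ip (T x) w = ip x z" using adjoint by blast
  next
    fix z' assume z': "\<forall>x\<in>D. ip (T x) w = ip x z'"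
    have "ip x (z' - z) = 0" if "x \<in> D" for x
      using that z' adjoint by (simp add: ip_diff_right)
    then have "z' - z = 0" by (rule eq_zero_if_orthogonal_to_dense[OF dense])
    then show "z' = z" by simp
  qed
qed

lemma adj_op_adjoint:
  assumes "closure D = UNIV" and "w \<in> adj_dom ip D T" and "x \<in> D"
  shows "ip (T x) w = ip x (adj_op ip D T w)"
proof -
  obtain z where z: "\<forall>x\<in>D. ip (T x) w = ip x z" using assms(2) unfolding adj_dom_def by blast
  then show ?thesis using adj_opI(2)[OF assms(1), of T w z] assms(3) by simp
qed

lemma
  assumes dense: "closure D = UNIV" and w: "w \<in> adj_dom ip D T" "w' \<in> adj_dom ip D T"
  shows adj_dom_add: "w + w' \<in> adj_dom ip D T"
    and adj_op_add: "adj_op ip D T (w + w') = adj_op ip D T w + adj_op ip D T w'"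
    and adj_dom_diff: "w - w' \<in> adj_dom ip D T"
    and adj_op_diff: "adj_op ip D T (w - w') = adj_op ip D T w - adj_op ip D T w'"
proof -
  have "ip (T x) (w + w') = ip x (adj_op ip D T w + adj_op ip D T w')"
    and "ip (T x) (w - w') = ip x (adj_op ip D T w - adj_op ip D T w')" if "x \<in> D" for x
    using adj_op_adjoint[OF dense w(1) that] adj_op_adjoint[OF dense w(2) that]
    by (simp_all add: ip_add_right ip_diff_right)
  then show "w + w' \<in> adj_dom ip D T"
    and "adj_op ip D T (w + w') = adj_op ip D T w + adj_op ip D T w'"
    and "w - w' \<in> adj_dom ip D T"
    and "adj_op ip D T (w - w') = adj_op ip D T w - adj_op ip D T w'"
    using adj_opI[OF dense] by blast+
qed

lemma joint_AFO_bounded_below: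
  assumes "joint_AFO sc ip D T Tt"
  shows "\<exists>\<mu>>0. \<forall>x\<in>D. \<mu> * norm x \<le> norm (Tt x)"
proof -
  have adjoint: "\<forall>x\<in>D. \<forall>y\<in>D. ip (T x) y = ip x (Tt y)"
    using assms unfolding joint_AFO_def by blast
  obtain \<mu> where "\<mu> > 0" and coercive: "\<forall>x\<in>D. 2 * \<mu> * (norm x)\<^sup>2 \<le> Re (ip (T x + Tt x) x)"
    using assms unfolding joint_AFO_def by blast
  have "\<mu> * norm x \<le> norm (Tt x)" if "x \<in> D" for x
  proof -
    have "Re (ip (T x + Tt x) x) = 2 * Re (ip (Tt x) x)"
      using adjoint \<open>x \<in> D\<close> Re_ip_commute[of x "Tt x"] by (simp add: ip_add_left)
    also have "\<dots> \<le> 2 * (norm (Tt x) * norm x)"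
      using abs_Re_ip_le[of "Tt x" x] by linarith
    finally have "2 * \<mu> * (norm x)\<^sup>2 \<le> 2 * (norm (Tt x) * norm x)"
      using coercive \<open>x \<in> D\<close> by auto
    then have "\<mu> * norm x * norm x \<le> norm (Tt x) * norm x"
      by (simp add: power2_eq_square)
    then show ?thesis
      by (cases "x = 0") (simp_all add: mult_le_cancel_right_pos)
  qed
  then show ?thesis using \<open>\<mu> > 0\<close> by blast
qed

end

locale quadratic_energy = chilbert_space sc ip
  for sc :: "complex \<Rightarrow> 'a::banach \<Rightarrow> 'a" and ip +
  fixes D :: "'a set" and S :: "'a \<Rightarrow> 'a" and g :: "'a \<Rightarrow> real"
  assumes subspace: "subspace D"
    and S_add: "\<And>x y. x \<in> D \<Longrightarrow> y \<in> D \<Longrightarrow> S (x + y) = S x + S y"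
    and S_scaleR: "\<And>r x. x \<in> D \<Longrightarrow> S (r *\<^sub>R x) = r *\<^sub>R S x"
    and g_add: "\<And>x y. x \<in> D \<Longrightarrow> y \<in> D \<Longrightarrow> g (x + y) = g x + g y"
    and g_scaleR: "\<And>r x. x \<in> D \<Longrightarrow> g (r *\<^sub>R x) = r * g x"
begin

definition energy :: "'a \<Rightarrow> real" where
  "energy x = (norm (S x))\<^sup>2 / 2 - g x"

lemma energy_midpoint:
  assumes "x \<in> D" "y \<in> D"
  shows "(norm (S x - S y))\<^sup>2 = 4 * (energy x + energy y - 2 * energy ((1/2) *\<^sub>R (x + y)))"
proof -
  have "x + y \<in> D" using assms subspace by (simp add: subspace_add)
  then have "S ((1/2) *\<^sub>R (x + y)) = (1/2) *\<^sub>R (S x + S y)"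
    and "g ((1/2) *\<^sub>R (x + y)) = (g x + g y) / 2"
    using assms by (simp_all add: S_scaleR S_add g_scaleR g_add)
  moreover have "(norm ((1/2) *\<^sub>R (S x + S y)))\<^sup>2 = (norm (S x + S y))\<^sup>2 / 4"
    by (simp add: power_divide)
  ultimately show ?thesis
    using parallelogram_law[of "S x" "S y"] unfolding energy_def by simp
qed

lemma energy_along_line:
  assumes "x \<in> D" "h \<in> D"
  shows "energy (x + t *\<^sub>R h)
    = energy x + t * (Re (ip (S x) (S h)) - g h) + t\<^sup>2 * ((norm (S h))\<^sup>2 / 2)"
proof -
  have "t *\<^sub>R h \<in> D" using assms subspace by (simp add: subspace_scale)
  then have "S (x + t *\<^sub>R h) = S x + t *\<^sub>R S h" and "g (x + t *\<^sub>R h) = g x + t * g h"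
    using assms by (simp_all add: S_add S_scaleR g_add g_scaleR)
  then show ?thesis
    unfolding energy_def
    by (simp add: norm_add_sq ip_scaleR_right power_mult_distrib algebra_simps)
qed

context
  fixes m :: real and xs :: "nat \<Rightarrow> 'a"
  assumes energy_ge: "\<And>x. x \<in> D \<Longrightarrow> m \<le> energy x"
    and xs_in: "\<And>n. xs n \<in> D"
    and minimizing: "(\<lambda>n. energy (xs n)) \<longlonglongrightarrow> m"
begin

lemma Cauchy_minimizing_sequence: "Cauchy (\<lambda>n. S (xs n))"
proof (rule Cauchy_if_dist_sq_le)
  fix n k
  have "xs n + xs k \<in> D" using xs_in subspace by (simp add: subspace_add)
  then have "m \<le> energy ((1/2) *\<^sub>R (xs n + xs k))"
    using subspace by (simp add: energy_ge subspace_scale)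
  then show "(dist (S (xs n)) (S (xs k)))\<^sup>2
      \<le> 4 * (energy (xs n) - m) + 4 * (energy (xs k) - m)"
    using energy_midpoint[OF xs_in xs_in] by (simp add: dist_norm)
next
  show "(\<lambda>n. 4 * (energy (xs n) - m)) \<longlonglongrightarrow> 0"
    by (intro tendsto_mult_right_zero LIM_zero minimizing)
qed

text \<open>Euler--Lagrange equation: \<open>t \<mapsto> energy (xs n + t h)\<close> is a quadratic in \<open>t\<close> bounded below
  by \<open>m\<close>; in the limit \<open>n \<rightarrow> \<infinity>\<close> its constant term becomes \<open>m\<close>, so its linear coefficient vanishes.\<close>

lemma minimizing_limit_represents:
  assumes lim: "(\<lambda>n. S (xs n)) \<longlonglongrightarrow> w" and "h \<in> D"
  shows "g h = Re (ip (S h) w)"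
proof -
  let ?c = "(norm (S h))\<^sup>2 / 2"
  have "0 \<le> t * (Re (ip w (S h)) - g h) + t\<^sup>2 * ?c" for t
  proof -
    have "(\<lambda>n. energy (xs n) + t * (Re (ip (S (xs n)) (S h)) - g h) + t\<^sup>2 * ?c)
        \<longlonglongrightarrow> m + t * (Re (ip w (S h)) - g h) + t\<^sup>2 * ?c"
      by (intro tendsto_intros minimizing bounded_linear.tendsto[OF bounded_linear_Re_ip_left lim])
    moreover have "m \<le> energy (xs n) + t * (Re (ip (S (xs n)) (S h)) - g h) + t\<^sup>2 * ?c" for n
      using energy_ge energy_along_line[OF xs_in \<open>h \<in> D\<close>] xs_in \<open>h \<in> D\<close> subspace
      by (metis subspace_add subspace_scale)
    ultimately have "m \<le> m + t * (Re (ip w (S h)) - g h) + t\<^sup>2 * ?c"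
      by (intro LIMSEQ_le_const) auto
    then show ?thesis by simp
  qed
  then have "Re (ip w (S h)) - g h = 0" by (rule linear_coeff_zero_if_quadratic_nonneg)
  then show ?thesis by (simp add: Re_ip_commute)
qed

end

lemma bounded_functional_representation:
  assumes bound: "\<And>x. x \<in> D \<Longrightarrow> g x \<le> C * norm (S x)"
  shows "\<exists>w. \<forall>x\<in>D. g x = Re (ip (S x) w)"
proof -
  have energy_lower: "- C\<^sup>2 / 2 \<le> energy x" if "x \<in> D" for x
  proof -
    have "0 \<le> (norm (S x) - C)\<^sup>2" by simp
    then show ?thesis
      using bound[OF that] unfolding energy_def by (simp add: power2_diff algebra_simps)
  qed
  define m where "m = Inf (energy ` D)"
  have "bdd_below (energy ` D)" using energy_lower by (rule bdd_belowI2)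
  then have energy_ge: "m \<le> energy x" if "x \<in> D" for x
    unfolding m_def using that by (simp add: cInf_lower)
  have "m \<in> closure (energy ` D)"
    unfolding m_def using \<open>bdd_below (energy ` D)\<close> subspace_0[OF subspace]
    by (intro closure_contains_Inf) auto
  then obtain es where es: "\<And>n. es n \<in> energy ` D" and "es \<longlonglongrightarrow> m"
    using closure_sequential by blast
  have "\<forall>n. \<exists>x. x \<in> D \<and> es n = energy x" using es by blast
  then obtain xs where xs_in: "\<And>n. xs n \<in> D" and "\<And>n. es n = energy (xs n)"
    by metis
  then have "es = (\<lambda>n. energy (xs n))" by blast
  then have minimizing: "(\<lambda>n. energy (xs n)) \<longlonglongrightarrow> m" using \<open>es \<longlonglongrightarrow> m\<close> by simp
  obtain w where "(\<lambda>n. S (xs n)) \<longlonglongrightarrow> w"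
    using Cauchy_minimizing_sequence[OF energy_ge xs_in minimizing]
    by (auto simp: Cauchy_convergent_iff convergent_def)
  then show ?thesis
    using minimizing_limit_represents[OF energy_ge xs_in minimizing] by blast
qed

end

context chilbert_space
begin

lemma adj_op_surj:
  assumes dense: "closure D = UNIV" and lin: "clinear_op sc D T"
    and "\<mu> > 0" and bounded_below: "\<And>x. x \<in> D \<Longrightarrow> \<mu> * norm x \<le> norm (T x)"
  shows "\<exists>w\<in>adj_dom ip D T. adj_op ip D T w = f"
proof -
  have D: "csubspace sc D" and T_add: "\<And>x y. x \<in> D \<Longrightarrow> y \<in> D \<Longrightarrow> T (x + y) = T x + T y"
    and T_sc: "\<And>a x. x \<in> D \<Longrightarrow> T (sc a x) = sc a (T x)"
    using lin unfolding clinear_op_def by blast+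
  have D_sc: "\<And>a x. x \<in> D \<Longrightarrow> sc a x \<in> D" using D unfolding csubspace_def by blast
  have "subspace D" using D by (rule subspace_if_csubspace)
  have T_scaleR: "T (r *\<^sub>R x) = r *\<^sub>R T x" if "x \<in> D" for r x
    using T_sc[OF that, of "complex_of_real r"] unfolding sc_of_real .
  interpret quadratic_energy sc ip D T "\<lambda>x. Re (ip x f)"
    using \<open>subspace D\<close> T_add T_scaleR
    by (intro quadratic_energy.intro quadratic_energy_axioms.intro chilbert_space.intro chilbert)
      (simp_all add: ip_add_left ip_scaleR_left)
  have "Re (ip x f) \<le> (norm f / \<mu>) * norm (T x)" if "x \<in> D" for x
  proof -
    have "Re (ip x f) \<le> norm x * norm f" using abs_Re_ip_le[of x f] by linarith
    also have "\<dots> \<le> (norm (T x) / \<mu>) * norm f"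
      using bounded_below[OF that] \<open>\<mu> > 0\<close>
      by (intro mult_right_mono) (simp_all add: pos_le_divide_eq mult.commute)
    finally show ?thesis by (simp add: ac_simps)
  qed
  then obtain w where Re_eq: "\<And>x. x \<in> D \<Longrightarrow> Re (ip x f) = Re (ip (T x) w)"
    using bounded_functional_representation by blast
  text \<open>Applying the real identity to \<open>i x\<close> recovers the imaginary parts.\<close>
  have "ip (T x) w = ip x f" if "x \<in> D" for x
    using Re_eq[OF that] Re_eq[OF D_sc[OF that, of \<i>]] T_sc[OF that, of \<i>]
    by (simp add: ip_sc_left complex_eq_iff)
  then show ?thesis using adj_opI[OF dense] by blast
qed

lemma joint_AFO_adj_op_surj:
  assumes "joint_AFO sc ip D T Tt"
  shows "adj_op ip D Tt ` adj_dom ip D Tt = UNIV"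
proof -
  have dense: "closure D = UNIV" and "clinear_op sc D Tt"
    using assms unfolding joint_AFO_def by simp_all
  obtain \<mu> where "\<mu> > 0" and bounded_below: "\<And>x. x \<in> D \<Longrightarrow> \<mu> * norm x \<le> norm (Tt x)"
    using joint_AFO_bounded_below[OF assms] by blast
  have "f \<in> adj_op ip D Tt ` adj_dom ip D Tt" for f
  proof -
    obtain w where "w \<in> adj_dom ip D Tt" "adj_op ip D Tt w = f"
      using adj_op_surj[OF dense \<open>clinear_op sc D Tt\<close> \<open>\<mu> > 0\<close> bounded_below] by blast
    then show ?thesis by (rule rev_image_eqI[OF _ sym])
  qed
  then show ?thesis by blast
qed

end

lemma inj_on_iff_trivial_kernel:
  fixes T :: "'a::group_add \<Rightarrow> 'b::group_add"
  assumes "V \<subseteq> W" and "0 \<in> V"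
    and V_diff: "\<And>x y. x \<in> V \<Longrightarrow> y \<in> V \<Longrightarrow> x - y \<in> V"
    and T_diff: "\<And>x y. x \<in> W \<Longrightarrow> y \<in> W \<Longrightarrow> T (x - y) = T x - T y"
  shows "inj_on T V \<longleftrightarrow> V \<inter> {w \<in> W. T w = 0} = {0}"
proof
  have "0 \<in> W" and "T 0 = 0"
    using \<open>V \<subseteq> W\<close> \<open>0 \<in> V\<close> T_diff[of 0 0] by auto
  moreover assume "inj_on T V"
  ultimately show "V \<inter> {w \<in> W. T w = 0} = {0}"
    using \<open>0 \<in> V\<close> by (auto dest: inj_onD[of T V _ 0])
next
  assume ker: "V \<inter> {w \<in> W. T w = 0} = {0}"
  show "inj_on T V"
  proof (rule inj_onI)
    fix x y assume "x \<in> V" "y \<in> V" "T x = T y"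
    then have "x - y \<in> V \<inter> {w \<in> W. T w = 0}"
      using V_diff[of x y] T_diff[of x y] \<open>V \<subseteq> W\<close> by auto
    then show "x = y" using ker by simp
  qed
qed

lemma image_eq_UNIV_iff_sum_with_kernel:
  fixes T :: "'a::ab_group_add \<Rightarrow> 'b::ab_group_add"
  assumes onto: "T ` W = UNIV" and "V \<subseteq> W"
    and W_add: "\<And>x y. x \<in> W \<Longrightarrow> y \<in> W \<Longrightarrow> x + y \<in> W"
    and W_diff: "\<And>x y. x \<in> W \<Longrightarrow> y \<in> W \<Longrightarrow> x - y \<in> W"
    and T_add: "\<And>x y. x \<in> W \<Longrightarrow> y \<in> W \<Longrightarrow> T (x + y) = T x + T y"
  shows "T ` V = UNIV \<longleftrightarrow> {v + k | v k. v \<in> V \<and> k \<in> {w \<in> W. T w = 0}} = W"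
proof
  assume onto_V: "T ` V = UNIV"
  show "{v + k | v k. v \<in> V \<and> k \<in> {w \<in> W. T w = 0}} = W"
  proof (intro equalityI subsetI)
    fix x assume "x \<in> {v + k | v k. v \<in> V \<and> k \<in> {w \<in> W. T w = 0}}"
    then show "x \<in> W" using W_add \<open>V \<subseteq> W\<close> by blast
  next
    fix w assume "w \<in> W"
    have "T w \<in> T ` V" using onto_V by simp
    then obtain v where "v \<in> V" "T v = T w" by (metis imageE)
    moreover have "T w = T v + T (w - v)"
      using T_add[of v "w - v"] W_diff[of w v] \<open>w \<in> W\<close> \<open>v \<in> V\<close> \<open>V \<subseteq> W\<close> by auto
    ultimately have "v \<in> V" "w - v \<in> {w \<in> W. T w = 0}" and "w = v + (w - v)"
      using W_diff[of w v] \<open>w \<in> W\<close> \<open>V \<subseteq> W\<close> by auto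
    then show "w \<in> {v + k | v k. v \<in> V \<and> k \<in> {w \<in> W. T w = 0}}" by blast
  qed
next
  assume decomp: "{v + k | v k. v \<in> V \<and> k \<in> {w \<in> W. T w = 0}} = W"
  have "f \<in> T ` V" for f
  proof -
    have "f \<in> T ` W" using onto by simp
    then obtain w where "w \<in> W" "f = T w" by blast
    moreover from \<open>w \<in> W\<close> obtain v k where "v \<in> V" "k \<in> W" "T k = 0" "w = v + k"
      using decomp by blast
    ultimately have "v \<in> V" "k \<in> W" "T k = 0" "f = T (v + k)" by simp_all
    then show ?thesis using T_add[of v k] \<open>V \<subseteq> W\<close> by auto
  qed
  then show "T ` V = UNIV" by blast
qed

theorem lemma3p10:
  fixes sc :: "complex \<Rightarrow> 'a::banach \<Rightarrow> 'a" and ip :: "'a \<Rightarrow> 'a \<Rightarrow> complex"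
    and W0 V :: "'a set" and T0 Tt0 :: "'a \<Rightarrow> 'a"
  assumes "chilbert sc ip"
    and "joint_AFO sc ip W0 T0 Tt0"
    and "closed_op W0 T0" and "closed_op W0 Tt0"
    and "csubspace sc V"
    and "V \<subseteq> adj_dom ip W0 Tt0"
    and "W0 \<subseteq> V"
    and "graph_closed_in (adj_op ip W0 Tt0) (adj_dom ip W0 Tt0) V"
  shows "bij_betw (adj_op ip W0 Tt0) V UNIV \<longleftrightarrow>
    (V \<inter> {w \<in> adj_dom ip W0 Tt0. adj_op ip W0 Tt0 w = 0} = {0} \<and>
     {v + k | v k. v \<in> V \<and> k \<in> {w \<in> adj_dom ip W0 Tt0. adj_op ip W0 Tt0 w = 0}}
       = adj_dom ip W0 Tt0)"
proof -
  interpret chilbert_space sc ip by (rule chilbert_space.intro) fact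
  have dense: "closure W0 = UNIV" using assms(2) unfolding joint_AFO_def by simp
  have "subspace V" using assms(5) by (rule subspace_if_csubspace)
  have "inj_on (adj_op ip W0 Tt0) V \<longleftrightarrow>
      V \<inter> {w \<in> adj_dom ip W0 Tt0. adj_op ip W0 Tt0 w = 0} = {0}"
    using assms(6) subspace_0[OF \<open>subspace V\<close>] subspace_diff[OF \<open>subspace V\<close>]
      adj_op_diff[OF dense, where T = Tt0]
    by (rule inj_on_iff_trivial_kernel)
  moreover have "adj_op ip W0 Tt0 ` V = UNIV \<longleftrightarrow>
      {v + k | v k. v \<in> V \<and> k \<in> {w \<in> adj_dom ip W0 Tt0. adj_op ip W0 Tt0 w = 0}}
        = adj_dom ip W0 Tt0"
    using joint_AFO_adj_op_surj[OF assms(2)] assms(6) adj_dom_add[OF dense, where T = Tt0]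
      adj_dom_diff[OF dense, where T = Tt0] adj_op_add[OF dense, where T = Tt0]
    by (rule image_eq_UNIV_iff_sum_with_kernel)
  ultimately show ?thesis unfolding bij_betw_def by blast
qed

end
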